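(* Let $K$ be an infinite subset of $\mathbb N$. Then there is an unbounded, concave and slowly varying modulus $f\colon[0,\infty)\to[0,\infty)$ such that $d^f(K)=1$.
   Context: A modulus is a function $f\colon[0,\infty)\to[0,\infty)$ such that $f(x)=0$ iff $x=0$, $f(x+y)\le f(x)+f(y)$ for all $x,y\ge0$, $f$ is increasing, and $f$ is continuous. A modulus $f$ is slowly varying if $\lim_{x\to\infty}\frac{f(ax)}{f(x)}=1$ for every $a>0$. For an unbounded modulus $f$ and $K\subseteq\mathbb N$, the $f$-density is $d^f(K)=\lim_{n\to\infty}\frac{f(|\{k\le n:k\in K\}|)}{f(n)}$ (when the limit exists). *)

theory Defs
  imports "HOL-Analysis.Analysis"
begin

definition is_modulus :: "(real \<Rightarrow> real) \<Rightarrow> bool" where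
  "is_modulus f \<longleftrightarrow>
     (\<forall>x\<ge>0. f x \<ge> 0) \<and>
     (\<forall>x\<ge>0. f x = 0 \<longleftrightarrow> x = 0) \<and>
     (\<forall>x\<ge>0. \<forall>y\<ge>0. f (x + y) \<le> f x + f y) \<and>
     mono_on {0..} f \<and>
     continuous_on {0..} f"

definition unbounded_modulus :: "(real \<Rightarrow> real) \<Rightarrow> bool" where
  "unbounded_modulus f \<longleftrightarrow> \<not> bdd_above (f ` {0..})"

definition slowly_varying :: "(real \<Rightarrow> real) \<Rightarrow> bool" where
  "slowly_varying f \<longleftrightarrow> (\<forall>a>0. ((\<lambda>x. f (a * x) / f x) \<longlongrightarrow> 1) at_top)"

definition count_upto :: "nat set \<Rightarrow> nat \<Rightarrow> nat" where
  "count_upto K n = card {k. k \<le> n \<and> k \<in> K}"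

definition has_f_density :: "(real \<Rightarrow> real) \<Rightarrow> nat set \<Rightarrow> real \<Rightarrow> bool" where
  "has_f_density f K d \<longleftrightarrow>
     ((\<lambda>n. f (real (count_upto K n)) / f (real n)) \<longlonglongrightarrow> d)"

end

theory Submission
  imports Defs
begin

text \<open>
  Let \<open>a\<^sub>0 < a\<^sub>1 < \<dots>\<close> grow at least geometrically, \<open>2 a\<^sub>k \<le> a\<^sub>k\<^sub>+\<^sub>1\<close>, and put
  \<open>f x = \<Sum>\<^sub>k min (x / a\<^sub>k) 1\<close>. Each summand is a concave modulus with Lipschitz
  constant \<open>1/a\<^sub>k \<le> 2\<^sup>-\<^sup>k/a\<^sub>0\<close>, so \<open>f\<close> is a concave Lipschitz modulus. The summands with
  \<open>a\<^sub>k \<le> x\<close> contribute 1 each and the remaining ones a geometric tail, so \<open>f x\<close> is the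
  number of \<open>a\<^sub>k \<le> x\<close> up to an additive 2. Doubling \<open>x\<close> passes at most one further
  \<open>a\<^sub>k\<close>, hence \<open>f (c x) - f x\<close> is bounded for each \<open>c > 0\<close>, and as \<open>f\<close> is unbounded,
  \<open>f\<close> is slowly varying. Choosing \<open>a\<^sub>k\<^sub>+\<^sub>1\<close> so large that \<open>K\<close> has at least \<open>a\<^sub>k\<close> elements
  below it makes the counting function of \<open>K\<close> pass all but one \<open>a\<^sub>k\<close> that \<open>n\<close> passes,
  so \<open>f (|K \<inter> [0,n]|)\<close> and \<open>f n\<close> also differ by a bounded amount.
\<close>

lemma tendsto_divide_1_if_bounded_diff:
  fixes g h :: "'a \<Rightarrow> real"
  assumes bounded: "eventually (\<lambda>x. \<bar>g x - h x\<bar> \<le> C) F" and h: "filterlim h at_top F"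
  shows "((\<lambda>x. g x / h x) \<longlongrightarrow> 1) F"
proof -
  have h_pos: "eventually (\<lambda>x. 0 < h x) F"
    using h by (simp add: filterlim_at_top_dense)
  have "((\<lambda>x. C / h x) \<longlongrightarrow> 0) F"
    by (rule tendsto_divide_0[OF tendsto_const filterlim_at_top_imp_at_infinity[OF h]])
  moreover have "eventually (\<lambda>x. norm (g x / h x - 1) \<le> C / h x) F"
    using bounded h_pos
  proof eventually_elim
    case (elim x)
    then have "norm (g x / h x - 1) = \<bar>g x - h x\<bar> / h x"
      by (simp add: field_simps abs_divide)
    also have "\<dots> \<le> C / h x"
      using elim by (intro divide_right_mono) auto
    finally show ?case .
  qed
  ultimately have "((\<lambda>x. g x / h x - 1) \<longlongrightarrow> 0) F"
    by (rule Lim_null_comparison[rotated])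
  then show ?thesis
    by (simp add: Lim_null[symmetric])
qed

lemma count_upto_mono: "m \<le> n \<Longrightarrow> count_upto K m \<le> count_upto K n"
  unfolding count_upto_def
  by (rule card_mono) (auto intro: finite_subset[of _ "{..n}"])

lemma count_upto_le: "count_upto K n \<le> Suc n"
  unfolding count_upto_def
  using card_mono[of "{..n}" "{k. k \<le> n \<and> k \<in> K}"] by auto

lemma count_upto_unbounded:
  assumes "infinite K"
  shows "\<exists>n. M \<le> count_upto K n"
proof -
  obtain S where S: "S \<subseteq> K" "finite S" "card S = M"
    using infinite_arbitrarily_large[OF assms] by blast
  have "S \<subseteq> {k. k \<le> Max S \<and> k \<in> K}"
    using S by auto
  then have "card S \<le> count_upto K (Max S)"
    unfolding count_upto_def by (rule card_mono[rotated]) (auto intro: finite_subset[of _ "{..Max S}"])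
  then show ?thesis
    using S by auto
qed

locale doubling_seq =
  fixes a :: "nat \<Rightarrow> real"
  assumes pos_0: "0 < a 0"
    and doubling: "2 * a k \<le> a (Suc k)"
begin

lemma pow_mult_le: "2 ^ m * a k \<le> a (k + m)"
proof (induction m)
  case (Suc m)
  have "2 ^ Suc m * a k = 2 * (2 ^ m * a k)" by simp
  also have "\<dots> \<le> 2 * a (k + m)" using Suc by simp
  also have "\<dots> \<le> a (k + Suc m)" using doubling[of "k + m"] by simp
  finally show ?case .
qed simp

lemma pos: "0 < a k"
  using pow_mult_le[of k 0] pos_0
  by (metis add_0 mult_pos_pos order_less_le_trans zero_less_numeral zero_less_power)

lemma incseq: "incseq a"
proof (rule incseq_SucI)
  show "a k \<le> a (Suc k)" for k
    using doubling[of k] pos[of k] by linarith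
qed

lemma ex_first_gt: "\<exists>m. x < a m \<and> (\<forall>k<m. a k \<le> x)"
proof -
  obtain n where "x / a 0 < 2 ^ n"
    using real_arch_pow[of 2] by auto
  then have "x < 2 ^ n * a 0"
    using pos_0 by (simp add: divide_less_eq)
  also have "\<dots> \<le> a n"
    using pow_mult_le[of n 0] by simp
  finally have "\<exists>m. x < a m" ..
  then have "x < a (LEAST m. x < a m)"
    by (rule LeastI_ex)
  moreover have "\<forall>k < (LEAST m. x < a m). a k \<le> x"
    using not_less_Least by force
  ultimately show ?thesis by blast
qed

definition ramp :: "nat \<Rightarrow> real \<Rightarrow> real" where
  "ramp k x = min (x / a k) 1"

definition ramp_sum :: "real \<Rightarrow> real" where
  "ramp_sum x = (\<Sum>k. ramp k x)"

lemma ramp_lipschitz: "\<bar>ramp k y - ramp k x\<bar> \<le> \<bar>y - x\<bar> / a 0 * (1/2) ^ k"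
proof -
  have "\<bar>ramp k y - ramp k x\<bar> \<le> \<bar>y / a k - x / a k\<bar>"
    unfolding ramp_def by (auto simp: min_def)
  also have "\<dots> = \<bar>y - x\<bar> / a k"
    using pos[of k] by (simp add: diff_divide_distrib[symmetric] abs_divide)
  also have "\<dots> \<le> \<bar>y - x\<bar> / (2 ^ k * a 0)"
    using pow_mult_le[of k 0] pos_0 pos[of k] by (intro divide_left_mono) auto
  also have "\<dots> = \<bar>y - x\<bar> / a 0 * (1/2) ^ k"
    by (simp add: power_one_over)
  finally show ?thesis .
qed

lemma summable_ramp: "summable (\<lambda>k. ramp k x)"
proof (rule summable_comparison_test)
  show "\<exists>N. \<forall>k\<ge>N. norm (ramp k x) \<le> \<bar>x\<bar> / a 0 * (1/2) ^ k"
    using ramp_lipschitz[of _ x 0] by (auto simp: ramp_def)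
qed (intro summable_mult summable_geometric; simp)

lemma ramp_nonneg: "0 \<le> x \<Longrightarrow> 0 \<le> ramp k x"
  using pos[of k] by (simp add: ramp_def)

lemma ramp_le_1: "ramp k x \<le> 1"
  by (simp add: ramp_def)

lemma ramp_eq_1: "a k \<le> x \<Longrightarrow> ramp k x = 1"
  using pos[of k] by (simp add: ramp_def)

lemma ramp_mono: "x \<le> y \<Longrightarrow> ramp k x \<le> ramp k y"
  using pos[of k] unfolding ramp_def by (intro min.mono divide_right_mono) auto

lemma ramp_subadditive:
  assumes "0 \<le> x" "0 \<le> y"
  shows "ramp k (x + y) \<le> ramp k x + ramp k y"
proof -
  have "min (u + v) 1 \<le> min u 1 + min v 1" if "0 \<le> u" "0 \<le> v" for u v :: real
    using that by (auto simp: min_def)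
  from this[of "x / a k" "y / a k"] show ?thesis
    using assms pos[of k] by (simp add: ramp_def add_divide_distrib)
qed

lemma ramp_concave:
  assumes "0 \<le> u" "0 \<le> v" "u + v = 1"
  shows "u * ramp k x + v * ramp k y \<le> ramp k (u * x + v * y)"
proof -
  have "u * ramp k x + v * ramp k y \<le> u * 1 + v * 1"
    using assms by (intro add_mono mult_left_mono ramp_le_1) auto
  moreover have "u * ramp k x + v * ramp k y \<le> u * (x / a k) + v * (y / a k)"
    using assms unfolding ramp_def by (intro add_mono mult_left_mono) auto
  ultimately show ?thesis
    using assms by (simp add: ramp_def add_divide_distrib)
qed

lemma ramp_sum_0 [simp]: "ramp_sum 0 = 0"
  by (simp add: ramp_sum_def ramp_def)

lemma ramp_sum_mono: "x \<le> y \<Longrightarrow> ramp_sum x \<le> ramp_sum y"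
  unfolding ramp_sum_def by (intro suminf_le summable_ramp ramp_mono)

lemma ramp_sum_nonneg: "0 \<le> x \<Longrightarrow> 0 \<le> ramp_sum x"
  using ramp_sum_mono[of 0 x] by simp

lemma ramp_sum_pos: "0 < x \<Longrightarrow> 0 < ramp_sum x"
proof -
  assume "0 < x"
  then have "0 < ramp 0 x"
    using pos_0 by (simp add: ramp_def)
  also have "ramp 0 x = (\<Sum>k\<in>{0}. ramp k x)" by simp
  also have "\<dots> \<le> ramp_sum x"
    unfolding ramp_sum_def using \<open>0 < x\<close>
    by (intro sum_le_suminf summable_ramp) (auto intro: ramp_nonneg)
  finally show ?thesis .
qed

lemma ramp_sum_lipschitz: "\<bar>ramp_sum y - ramp_sum x\<bar> \<le> 2 / a 0 * \<bar>y - x\<bar>"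
proof -
  have "ramp_sum y - ramp_sum x = (\<Sum>k. ramp k y - ramp k x)"
    unfolding ramp_sum_def by (intro suminf_diff summable_ramp)
  also have "\<bar>\<dots>\<bar> \<le> (\<Sum>k. \<bar>y - x\<bar> / a 0 * (1/2) ^ k)"
    using norm_suminf_le[of "\<lambda>k. ramp k y - ramp k x" "\<lambda>k. \<bar>y - x\<bar> / a 0 * (1/2) ^ k"]
    by (simp only: real_norm_def ramp_lipschitz summable_mult summable_geometric_iff)
  also have "\<dots> = \<bar>y - x\<bar> / a 0 * (\<Sum>k. (1/2) ^ k)"
    by (intro suminf_mult summable_geometric) simp
  also have "\<dots> = 2 / a 0 * \<bar>y - x\<bar>"
    by (simp add: suminf_geometric)
  finally show ?thesis .
qed

lemma ramp_sum_subadditive: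
  assumes "0 \<le> x" "0 \<le> y"
  shows "ramp_sum (x + y) \<le> ramp_sum x + ramp_sum y"
proof -
  have "ramp_sum (x + y) \<le> (\<Sum>k. ramp k x + ramp k y)"
    unfolding ramp_sum_def using assms
    by (intro suminf_le ramp_subadditive summable_add summable_ramp)
  also have "\<dots> = ramp_sum x + ramp_sum y"
    unfolding ramp_sum_def by (intro suminf_add[symmetric] summable_ramp)
  finally show ?thesis .
qed

lemma concave_on_ramp_sum: "concave_on {0..} ramp_sum"
  unfolding concave_on_iff
proof (intro conjI ballI allI impI)
  fix x y u v :: real
  assume uv: "0 \<le> u" "0 \<le> v" "u + v = 1"
  have "u * ramp_sum x + v * ramp_sum y = (\<Sum>k. u * ramp k x + v * ramp k y)"
    unfolding ramp_sum_def
    by (simp add: suminf_add[symmetric] summable_mult summable_ramp suminf_mult[symmetric]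
        del: suminf_add)
  also have "\<dots> \<le> ramp_sum (u * x + v * y)"
    unfolding ramp_sum_def
    by (intro suminf_le ramp_concave[OF uv] summable_add summable_mult summable_ramp)
  finally show "u * ramp_sum x + v * ramp_sum y \<le> ramp_sum (u *\<^sub>R x + v *\<^sub>R y)"
    by simp
qed simp

lemma is_modulus_ramp_sum: "is_modulus ramp_sum"
  unfolding is_modulus_def
proof (intro conjI allI impI)
  show "(ramp_sum x = 0) = (x = 0)" if "0 \<le> x" for x
    using that ramp_sum_pos[of x] by force
  have "(2 / a 0)-lipschitz_on {0..} ramp_sum"
    using pos_0 ramp_sum_lipschitz by (intro lipschitz_onI) (auto simp: dist_real_def)
  then show "continuous_on {0..} ramp_sum"
    by (rule lipschitz_on_continuous_on)
qed (auto intro: ramp_sum_nonneg ramp_sum_subadditive mono_onI ramp_sum_mono)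

lemma ramp_sum_ge: "a j \<le> x \<Longrightarrow> real (Suc j) \<le> ramp_sum x"
proof -
  assume x: "a j \<le> x"
  have "(\<Sum>k\<le>j. ramp k x) = (\<Sum>k\<le>j. 1)"
    using x incseq by (intro sum.cong ramp_eq_1) (auto dest: incseqD order_trans)
  moreover have "(\<Sum>k\<le>j. ramp k x) \<le> ramp_sum x"
    unfolding ramp_sum_def using x pos[of j]
    by (intro sum_le_suminf summable_ramp ramp_nonneg) auto
  ultimately show ?thesis by simp
qed

lemma ramp_sum_le:
  assumes "0 \<le> x" "x < a m"
  shows "ramp_sum x \<le> real m + 2"
proof -
  have tail: "ramp (n + m) x \<le> (1/2) ^ n" for n
  proof -
    have "ramp (n + m) x \<le> x / a (m + n)"
      by (simp add: ramp_def add.commute)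
    also have "\<dots> \<le> a m / a (m + n)"
      using assms pos[of "m + n"] by (intro divide_right_mono) auto
    also have "\<dots> \<le> (1/2) ^ n"
      using pow_mult_le[of n m] pos[of "m + n"] by (simp add: divide_le_eq power_one_over field_simps)
    finally show ?thesis .
  qed
  have "ramp_sum x = (\<Sum>n. ramp (n + m) x) + (\<Sum>k<m. ramp k x)"
    unfolding ramp_sum_def by (intro suminf_split_initial_segment summable_ramp)
  also have "\<dots> \<le> (\<Sum>n. (1/2) ^ n) + (\<Sum>k<m. 1)"
    by (intro add_mono suminf_le sum_mono tail ramp_le_1 summable_ignore_initial_segment
        summable_ramp) simp
  finally show ?thesis
    by (simp add: suminf_geometric)
qed

lemma ramp_sum_double_le:
  assumes "0 \<le> x"
  shows "ramp_sum (2 * x) \<le> ramp_sum x + 3"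
proof -
  obtain m where m: "x < a m" "\<forall>k<m. a k \<le> x"
    using ex_first_gt by blast
  have "2 * x < a (Suc m)"
    using m(1) doubling[of m] by simp
  then have "ramp_sum (2 * x) \<le> real (Suc m) + 2"
    using assms by (intro ramp_sum_le) auto
  moreover have "real m \<le> ramp_sum x"
    using m(2) ramp_sum_ge ramp_sum_nonneg[OF assms] by (cases m) auto
  ultimately show ?thesis by simp
qed

lemma ramp_sum_pow_le: "0 \<le> x \<Longrightarrow> ramp_sum (2 ^ j * x) \<le> ramp_sum x + 3 * j"
proof (induction j)
  case (Suc j)
  have "ramp_sum (2 ^ Suc j * x) = ramp_sum (2 * (2 ^ j * x))"
    by (simp add: mult.assoc)
  also have "\<dots> \<le> ramp_sum (2 ^ j * x) + 3"
    using Suc.prems by (intro ramp_sum_double_le) simp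
  finally show ?case
    using Suc by simp
qed simp

lemma ramp_sum_scale_diff_bounded:
  assumes "0 < c"
  shows "\<exists>C. \<forall>x\<ge>0. \<bar>ramp_sum (c * x) - ramp_sum x\<bar> \<le> C"
proof -
  obtain j where j: "max c (1 / c) < 2 ^ j"
    using real_arch_pow[of 2 "max c (1 / c)"] by auto
  have shift: "ramp_sum y \<le> ramp_sum z + 3 * j" if "0 \<le> z" "y \<le> 2 ^ j * z" for y z
    using ramp_sum_mono[OF that(2)] ramp_sum_pow_le[OF that(1), where j = j] by linarith
  have "\<bar>ramp_sum (c * x) - ramp_sum x\<bar> \<le> 3 * j" if x: "0 \<le> x" for x
  proof -
    have "c * x \<le> 2 ^ j * x"
      using j x by (intro mult_right_mono) auto
    moreover have "1 \<le> 2 ^ j * c"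
      using j assms by (simp add: field_simps)
    then have "x \<le> 2 ^ j * (c * x)"
      using x mult_right_mono[of 1 "2 ^ j * c" x] by (simp add: mult.assoc)
    ultimately show ?thesis
      using shift[of x "c * x"] shift[of "c * x" x] x assms by (simp add: abs_le_iff)
  qed
  then show ?thesis by blast
qed

lemma filterlim_ramp_sum_at_top: "filterlim ramp_sum at_top at_top"
  unfolding filterlim_at_top eventually_at_top_linorder
proof
  fix Z :: real
  obtain j :: nat where "Z \<le> real j"
    using real_arch_simple by blast
  then have "\<forall>x\<ge>a j. Z \<le> ramp_sum x"
    using ramp_sum_ge[of j] by fastforce
  then show "\<exists>N. \<forall>x\<ge>N. Z \<le> ramp_sum x" ..
qed

lemma unbounded_modulus_ramp_sum: "unbounded_modulus ramp_sum"
  unfolding unbounded_modulus_def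
proof
  assume "bdd_above (ramp_sum ` {0..})"
  then obtain B where B: "\<And>x. 0 \<le> x \<Longrightarrow> ramp_sum x \<le> B"
    by (auto simp: bdd_above_def)
  obtain j :: nat where "B \<le> real j"
    using real_arch_simple by blast
  moreover have "real (Suc j) \<le> ramp_sum (a j)"
    by (rule ramp_sum_ge) simp
  ultimately show False
    using B[of "a j"] pos[of j] by simp
qed

lemma slowly_varying_ramp_sum: "slowly_varying ramp_sum"
  unfolding slowly_varying_def
proof (intro allI impI)
  fix c :: real
  assume "0 < c"
  then obtain C where "\<forall>x\<ge>0. \<bar>ramp_sum (c * x) - ramp_sum x\<bar> \<le> C"
    using ramp_sum_scale_diff_bounded by blast
  then have "eventually (\<lambda>x. \<bar>ramp_sum (c * x) - ramp_sum x\<bar> \<le> C) at_top"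
    unfolding eventually_at_top_linorder by blast
  then show "((\<lambda>x. ramp_sum (c * x) / ramp_sum x) \<longlongrightarrow> 1) at_top"
    using filterlim_ramp_sum_at_top by (rule tendsto_divide_1_if_bounded_diff)
qed

lemma has_f_density_ramp_sum:
  assumes catch_up: "\<And>k n. a (Suc k) \<le> real n \<Longrightarrow> a k \<le> real (count_upto K n)"
  shows "has_f_density ramp_sum K 1"
  unfolding has_f_density_def
proof (rule tendsto_divide_1_if_bounded_diff[where C = "3 + 2 / a 0"])
  show "filterlim (\<lambda>n. ramp_sum (real n)) at_top sequentially"
    by (rule filterlim_compose[OF filterlim_ramp_sum_at_top filterlim_real_sequentially])
  show "eventually (\<lambda>n. \<bar>ramp_sum (count_upto K n) - ramp_sum n\<bar> \<le> 3 + 2 / a 0) sequentially"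
  proof (intro always_eventually allI)
    fix n
    have "ramp_sum (count_upto K n) \<le> ramp_sum (real n + 1)"
      using count_upto_le[of K n] by (intro ramp_sum_mono) simp
    also have "\<dots> \<le> ramp_sum n + 2 / a 0"
      using ramp_sum_lipschitz[of "real n + 1" "real n"] by simp
    finally have upper: "ramp_sum (count_upto K n) \<le> ramp_sum n + 2 / a 0" .
    obtain m where m: "real n < a m" "\<forall>k<m. a k \<le> real n"
      using ex_first_gt by blast
    have "ramp_sum n \<le> real m + 2"
      using m(1) by (intro ramp_sum_le) auto
    moreover have "real m - 1 \<le> ramp_sum (count_upto K n)"
    proof (cases "2 \<le> m")
      case True
      define i where "i = m - 2"
      with True have i: "m = Suc (Suc i)"
        by simp
      then have "a i \<le> real (count_upto K n)"
        using catch_up m(2) by simp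
      then show ?thesis
        using ramp_sum_ge[of i] i by simp
    next
      case False
      then show ?thesis
        using ramp_sum_nonneg[of "real (count_upto K n)"] by simp
    qed
    ultimately show "\<bar>ramp_sum (count_upto K n) - ramp_sum n\<bar> \<le> 3 + 2 / a 0"
      using upper divide_pos_pos[OF _ pos_0, of 2] unfolding abs_le_iff by linarith
  qed
qed

end

primrec sparse_seq :: "nat set \<Rightarrow> nat \<Rightarrow> nat" where
  "sparse_seq K 0 = 1"
| "sparse_seq K (Suc k) = 2 * sparse_seq K k + (LEAST n. sparse_seq K k \<le> count_upto K n)"

lemma doubling_seq_sparse_seq: "doubling_seq (\<lambda>k. real (sparse_seq K k))"
  by unfold_locales simp_all

lemma sparse_seq_le_count_upto:
  assumes "infinite K" "sparse_seq K (Suc k) \<le> n"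
  shows "sparse_seq K k \<le> count_upto K n"
proof -
  have "sparse_seq K k \<le> count_upto K (LEAST n. sparse_seq K k \<le> count_upto K n)"
    using count_upto_unbounded[OF assms(1)] by (rule LeastI_ex)
  also have "\<dots> \<le> count_upto K n"
    using assms(2) by (intro count_upto_mono) simp
  finally show ?thesis .
qed

theorem lemma2p5:
  fixes K :: "nat set"
  assumes "infinite K"
  shows "\<exists>f :: real \<Rightarrow> real. is_modulus f \<and> unbounded_modulus f \<and>
           concave_on {0..} f \<and> slowly_varying f \<and> has_f_density f K 1"
proof -
  interpret doubling_seq "\<lambda>k. real (sparse_seq K k)"
    by (rule doubling_seq_sparse_seq)
  have "has_f_density ramp_sum K 1"
  proof (rule has_f_density_ramp_sum)
    show "real (sparse_seq K k) \<le> real (count_upto K n)"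
      if "real (sparse_seq K (Suc k)) \<le> real n" for k n
      using sparse_seq_le_count_upto[OF assms, of k n] that by (simp only: of_nat_le_iff)
  qed
  then show ?thesis
    using is_modulus_ramp_sum unbounded_modulus_ramp_sum concave_on_ramp_sum
      slowly_varying_ramp_sum by blast
qed

end
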